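(* Let $m\ge1$, let $\phi$ be the unique real root in $(1,2]$ of $\rho^m-\rho^{m-1}-1$, and set $p^-=\frac{\phi-1}{1+m(\phi-1)}$, $p^\bigstar=(m-1)p^-$, $p^+=1-mp^-$. For $\mathbf s\in\{+,-,\bigstar\}^n$ and $x\in\{+,-,\bigstar\}$ let $P^{(x)}_{\mathbf s}=\#\{k: s_k=x\}/n$. Then for every $\epsilon\in(0,1)$, $$\lim_{n\to\infty}\frac{\bigl|\{\mathbf s\in\mathcal S_n:\ |P^{(-)}_{\mathbf s}-p^-|\le\epsilon,\ |P^{(+)}_{\mathbf s}-p^+|\le\epsilon,\ |P^{(\bigstar)}_{\mathbf s}-p^\bigstar|\le\epsilon\}\bigr|}{N(n)}=1 .$$
   Context: Fix an integer $m\ge1$. Define integers $N(n)$ by $N(n)=1$ for $1-m\le n\le 0$ and $N(n)=N(n-1)+N(n-m)$ for $n\ge1$; write $\mathbb N_n=\{1,\dots,N(n)\}$ (so $\mathbb N_n=\{1\}$ for $n\le 0$, and $\mathbb N_{n-m}\subseteq\mathbb N_{n-1}$). Define vectors $\mathbf s_n^{(i)}\in\{+,-,\bigstar\}^n$ for $n\ge0$, $i\in\mathbb N_n$, recursively: $\mathbf s_0^{(1)}$ is the empty vector, and for $n\ge1$: $\mathbf s_n^{(j)}=(\mathbf s_{n-1}^{(j)},+)$ and $\mathbf s_n^{(j+N(n-1))}=(\mathbf s_{n-1}^{(j)},-)$ for $j\in\mathbb N_{n-m}$, while $\mathbf s_n^{(j)}=(\mathbf s_{n-1}^{(j)},\bigstar)$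 for $j\in\mathbb N_{n-1}\setminus\mathbb N_{n-m}$. Let $\mathcal S_n=\{\mathbf s_n^{(i)}:i\in\mathbb N_n\}$ for $n\ge1$. *)

theory Defs
  imports "HOL-Analysis.Analysis"
begin

datatype sgn = Plus | Minus | Star

text \<open>N m n for n \<ge> 0 (for m \<ge> 1, n-(m-1) = n+1-m); values at n \<le> 0 are 1.\<close>
fun NN :: "nat \<Rightarrow> nat \<Rightarrow> nat" where
  "NN m 0 = 1"
| "NN m (Suc n) = NN m n + (if Suc n \<le> m then 1 else NN m (n - (m - 1)))"

definition Nz :: "nat \<Rightarrow> int \<Rightarrow> nat" where
  "Nz m k = (if k \<le> 0 then 1 else NN m (nat k))"

text \<open>svec m n i = s_n^(i), as a list of length n (component k is element k-1).\<close>
fun svec :: "nat \<Rightarrow> nat \<Rightarrow> nat \<Rightarrow> sgn list" where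
  "svec m 0 i = []"
| "svec m (Suc n) i =
     (if i \<le> Nz m (int (Suc n) - int m) then svec m n i @ [Plus]
      else if i \<le> NN m n then svec m n i @ [Star]
      else svec m n (i - NN m n) @ [Minus])"

definition SS :: "nat \<Rightarrow> nat \<Rightarrow> sgn list set" where
  "SS m n = svec m n ` {1..NN m n}"

definition freq :: "sgn list \<Rightarrow> sgn \<Rightarrow> real" where
  "freq s x = real (length (filter (\<lambda>y. y = x) s)) / real (length s)"

definition phi :: "nat \<Rightarrow> real" where
  "phi m = (THE r. 1 < r \<and> r \<le> 2 \<and> r ^ m - r ^ (m - 1) - 1 = 0)"

definition pminus :: "nat \<Rightarrow> real" where
  "pminus m = (phi m - 1) / (1 + real m * (phi m - 1))"

definition pstar :: "nat \<Rightarrow> real" where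
  "pstar m = (real m - 1) * pminus m"

definition pplus :: "nat \<Rightarrow> real" where
  "pplus m = 1 - real m * pminus m"

end

theory Submission
  imports Defs
begin

text \<open>
  Every vector in \<open>\<S>\<^sub>n\<close> is a word in the blocks \<open>+\<close> and \<open>- \<star>\<^sup>m\<^sup>-\<^sup>1\<close>, the last
  block possibly cut short. Hence \<open>#\<star>\<close> equals \<open>(m - 1) #-\<close> up to at most \<open>m - 1\<close>, and
  \<open>#+ = n - #- - #\<star>\<close>, so all three frequencies are determined up to \<open>O(1/n)\<close> by the
  frequency of \<open>-\<close>; it remains to show that \<open>#-/n\<close> concentrates at \<open>p\<^sup>-\<close>.

  For this we tilt by \<open>t > 0\<close>: the weight \<open>W\<^sub>t(n) = \<Sum>\<^sub>i t\<^sup>#\<^sup>-\<close> satisfies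
  \<open>W\<^sub>t(n+1) = W\<^sub>t(n) + t W\<^sub>t(n+1-m)\<close>, so \<open>W\<^sub>t(n) = O(x\<^sup>n)\<close> whenever
  \<open>x\<^sup>m\<^sup>-\<^sup>1 + t \<le> x\<^sup>m\<close>, while \<open>N(n) = W\<^sub>1(n)\<close> grows like \<open>\<phi>\<^sup>n\<close>. The derivative at
  \<open>t = 1\<close> of \<open>(\<phi> t\<^sup>b)\<^sup>m\<^sup>-\<^sup>1 (\<phi> t\<^sup>b - 1) - t\<close> is a positive multiple of \<open>b - p\<^sup>-\<close>, so
  \<open>x = \<phi> t\<^sup>b\<close> is admissible for some \<open>t\<close> on the side of 1 given by the sign of
  \<open>b - p\<^sup>-\<close>. Markov's inequality for \<open>t\<^sup>#\<^sup>-\<close> then bounds the fraction of vectors with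
  \<open>#- \<ge> a n\<close> (for \<open>a > p\<^sup>-\<close>), resp. \<open>#- \<le> a n\<close> (for \<open>a < p\<^sup>-\<close>), by
  \<open>C (t\<^sup>b\<^sup>-\<^sup>a)\<^sup>n\<close>, which decays geometrically when \<open>b\<close> lies strictly between \<open>a\<close> and \<open>p\<^sup>-\<close>.
\<close>

section \<open>Markov-type bounds and lagged recurrences\<close>

lemma powr_le_powr_of_sign:
  fixes t x y :: real
  assumes "0 < t" "0 \<le> (t - 1) * (y - x)"
  shows "t powr x \<le> t powr y"
  using assms by (auto simp: zero_le_mult_iff intro: powr_mono powr_mono')

lemma powr_less_one_of_sign:
  fixes t y :: real
  assumes "0 < t" "(t - 1) * y < 0"
  shows "t powr y < 1"
  using assms powr_less_mono'[of t 0 y] by (auto simp: mult_less_0_iff intro: powr_less_one)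

lemma card_mult_le_sum:
  fixes f :: "'a \<Rightarrow> real"
  assumes "finite A" "\<And>i. i \<in> A \<Longrightarrow> 0 \<le> f i"
  shows "c * card {i \<in> A. c \<le> f i} \<le> sum f A"
proof -
  have "c * card {i \<in> A. c \<le> f i} = (\<Sum>i \<in> {i \<in> A. c \<le> f i}. c)"
    by simp
  also have "\<dots> \<le> (\<Sum>i \<in> {i \<in> A. c \<le> f i}. f i)"
    by (rule sum_mono) simp
  also have "\<dots> \<le> sum f A"
    using assms by (intro sum_mono2) auto
  finally show ?thesis .
qed

lemma filter_card_ratio_tendsto_1:
  fixes A E :: "nat \<Rightarrow> 'a set"
  assumes fin: "\<And>n. finite (A n)" and ne: "\<And>n. A n \<noteq> {}"
    and exceptions: "\<forall>\<^sub>F n in sequentially. {x \<in> A n. \<not> P n x} \<subseteq> E n"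
    and E: "\<And>n. E n \<subseteq> A n" "(\<lambda>n. card (E n) / card (A n)) \<longlonglongrightarrow> 0"
  shows "(\<lambda>n. card {x \<in> A n. P n x} / card (A n)) \<longlonglongrightarrow> 1"
proof -
  have split: "card {x \<in> A n. P n x} / card (A n) = 1 - card {x \<in> A n. \<not> P n x} / card (A n)" for n
  proof -
    have "card (A n) = card ({x \<in> A n. P n x} \<union> {x \<in> A n. \<not> P n x})"
      by (rule arg_cong[where f = card]) blast
    also have "\<dots> = card {x \<in> A n. P n x} + card {x \<in> A n. \<not> P n x}"
      using fin[of n] by (intro card_Un_disjoint) auto
    finally have "real (card (A n)) = card {x \<in> A n. P n x} + card {x \<in> A n. \<not> P n x}"
      by simp
    moreover have "0 < card (A n)"
      using fin[of n] ne[of n] by (simp add: card_gt_0_iff)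
    ultimately show ?thesis
      by (simp add: field_simps)
  qed
  have "\<forall>\<^sub>F n in sequentially. card {x \<in> A n. \<not> P n x} / card (A n) \<le> card (E n) / card (A n)"
    using exceptions
  proof eventually_elim
    case (elim n)
    have "finite (E n)"
      using E(1)[of n] fin[of n] by (rule finite_subset)
    then have "card {x \<in> A n. \<not> P n x} \<le> card (E n)"
      using elim by (rule card_mono)
    then show ?case
      by (simp add: divide_right_mono)
  qed
  then have "(\<lambda>n. card {x \<in> A n. \<not> P n x} / card (A n)) \<longlonglongrightarrow> 0"
    using tendsto_sandwich[OF _ _ tendsto_const E(2)] by simp
  then have "(\<lambda>n. 1 - card {x \<in> A n. \<not> P n x} / card (A n)) \<longlonglongrightarrow> 1 - 0"
    by (intro tendsto_diff tendsto_const)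
  then show ?thesis
    by (simp add: split)
qed

lemma lagged_recurrence_ge_1:
  fixes f :: "nat \<Rightarrow> real"
  assumes rec: "\<And>n. f (Suc n) = f n + t * f (Suc n - m)" and f0: "f 0 = 1"
    and "m \<ge> 1" "0 \<le> t"
  shows "1 \<le> f n"
proof (induction n rule: less_induct)
  case (less n)
  show ?case
  proof (cases n)
    case (Suc k)
    have "1 \<le> f k" "1 \<le> f (Suc k - m)"
      using less Suc assms(3) by auto
    then show ?thesis
      using rec[of k] Suc assms(4) by (simp add: add_increasing2)
  qed (simp add: f0)
qed

lemma lagged_recurrence_upper:
  fixes f :: "nat \<Rightarrow> real"
  assumes rec: "\<And>n. f (Suc n) = f n + t * f (Suc n - m)" and f0: "f 0 = 1"
    and m: "m \<ge> 1" and t: "0 < t" and x: "0 < x" and char: "x ^ (m - 1) + t \<le> x ^ m"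
  shows "f n \<le> max 1 (t / (x - 1)) * x ^ n"
proof -
  have "x ^ m = x ^ (m - 1) * x"
    using m power_minus_mult[of m x] by simp
  then have "0 < x ^ (m - 1) * (x - 1)"
    using char t by (simp add: algebra_simps)
  then have x1: "1 < x"
    using x by (simp add: zero_less_mult_iff)
  define C where "C = max 1 (t / (x - 1))"
  have C1: "1 \<le> C" and Ct: "t \<le> C * (x - 1)"
    using x1 by (auto simp: C_def field_simps max_def)
  show ?thesis
    unfolding C_def[symmetric]
  proof (induction n rule: less_induct)
    case (less n)
    show ?case
    proof (cases n)
      case 0
      then show ?thesis using C1 f0 by simp
    next
      case (Suc k)
      have IHk: "f k \<le> C * x ^ k"
        using less Suc by simp
      show ?thesis
      proof (cases "Suc k \<le> m")
        case True
        have "t \<le> C * (x - 1) * x ^ k"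
          using mult_mono[OF Ct one_le_power[of x k]] Ct x1 t by simp
        then show ?thesis
          using rec[of k] True IHk f0 Suc by (simp add: algebra_simps)
      next
        case False
        define j where "j = Suc k - m"
        have kj: "k = j + (m - 1)" "n = j + m"
          using False Suc m by (auto simp: j_def)
        have IHj: "f j \<le> C * x ^ j"
          using less kj m by simp
        have "f n = f k + t * f j"
          using rec[of k] Suc by (simp add: j_def)
        also have "\<dots> \<le> C * x ^ k + t * (C * x ^ j)"
          using IHk IHj t by (intro add_mono mult_left_mono) auto
        also have "\<dots> = C * x ^ j * (x ^ (m - 1) + t)"
          using kj by (simp add: power_add algebra_simps)
        also have "\<dots> \<le> C * x ^ j * x ^ m"
          using char C1 x by (intro mult_left_mono) auto
        finally show ?thesis
          using kj by (simp add: power_add)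
      qed
    qed
  qed
qed

lemma lagged_recurrence_lower:
  fixes f :: "nat \<Rightarrow> real"
  assumes rec: "\<And>n. f (Suc n) = f n + t * f (Suc n - m)" and f0: "f 0 = 1"
    and m: "m \<ge> 1" and t: "0 \<le> t" and x: "1 \<le> x" and char: "x ^ m \<le> x ^ (m - 1) + t"
  shows "x ^ n \<le> f n * x ^ m"
proof (induction n rule: less_induct)
  case (less n)
  have f_ge_1: "1 \<le> f l" for l
    by (rule lagged_recurrence_ge_1[OF rec f0 m t])
  show ?case
  proof (cases "n \<le> m")
    case True
    then have "x ^ n \<le> x ^ m"
      using x by (rule power_increasing)
    also have "\<dots> \<le> f n * x ^ m"
      using f_ge_1[of n] x by simp
    finally show ?thesis .
  next
    case False
    then obtain k where k: "n = Suc k" "m \<le> k"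
      by (cases n) auto
    have "x ^ n = x ^ (n - m) * x ^ m"
      using False by (simp flip: power_add)
    also have "\<dots> \<le> x ^ (n - m) * (x ^ (m - 1) + t)"
      using char x by (intro mult_left_mono) auto
    also have "\<dots> = x ^ k + t * x ^ (n - m)"
      using k m by (simp add: algebra_simps flip: power_add)
    also have "\<dots> \<le> f k * x ^ m + t * (f (n - m) * x ^ m)"
      using less[of k] less[of "n - m"] k m t by (intro add_mono mult_left_mono) auto
    also have "\<dots> = f n * x ^ m"
      using rec[of k] k by (simp add: algebra_simps)
    finally show ?thesis .
  qed
qed

section \<open>The sign vectors\<close>

lemma NN_pos: "0 < NN m n"
  by (induction n) auto

lemma NN_mono: "k \<le> l \<Longrightarrow> NN m k \<le> NN m l"
  by (rule lift_Suc_mono_le[of "NN m"]) auto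

lemma Nz_eq_NN_nat: "Nz m k = NN m (nat k)"
  by (simp add: Nz_def)

lemma NN_Suc:
  assumes "m \<ge> 1"
  shows "NN m (Suc n) = NN m n + NN m (Suc n - m)"
  using assms by (simp add: Suc_diff_le)

lemma NN_lag_le: "m \<ge> 1 \<Longrightarrow> NN m (Suc n - m) \<le> NN m n"
  by (rule NN_mono) simp

lemma svec_Suc:
  assumes "m \<ge> 1"
  shows "svec m (Suc n) i =
    (if NN m n < i then svec m n (i - NN m n) @ [Minus]
     else svec m n i @ [if i \<le> NN m (Suc n - m) then Plus else Star])"
proof -
  have "nat (int (Suc n) - int m) = Suc n - m"
    by simp
  then have "Nz m (int (Suc n) - int m) = NN m (Suc n - m)"
    by (simp only: Nz_eq_NN_nat)
  then show ?thesis
    using NN_lag_le[OF assms, of n] by simp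
qed

lemma length_svec [simp]: "length (svec m n i) = n"
  by (induction n arbitrary: i) auto

lemma svec_inj_on:
  assumes "m \<ge> 1"
  shows "inj_on (svec m n) {1..NN m n}"
proof (induction n)
  case 0
  then show ?case by simp
next
  case (Suc n)
  let ?prev = "\<lambda>i. if NN m n < i then i - NN m n else i"
  have last: "last (svec m (Suc n) i) = Minus \<longleftrightarrow> NN m n < i" for i
    by (simp add: svec_Suc[OF assms] del: svec.simps)
  have butlast: "butlast (svec m (Suc n) i) = svec m n (?prev i)" for i
    by (simp add: svec_Suc[OF assms] del: svec.simps)
  have prev_range: "?prev i \<in> {1..NN m n}" if "i \<in> {1..NN m (Suc n)}" for i
    using that NN_Suc[OF assms, of n] NN_lag_le[OF assms, of n] by auto
  show ?case
  proof (rule inj_onI)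
    fix i j assume i: "i \<in> {1..NN m (Suc n)}" and j: "j \<in> {1..NN m (Suc n)}"
      and eq: "svec m (Suc n) i = svec m (Suc n) j"
    have side: "NN m n < i \<longleftrightarrow> NN m n < j"
      using last[of i] last[of j] eq by simp
    have "?prev i = ?prev j"
      using Suc.IH prev_range[OF i] prev_range[OF j] butlast[of i] butlast[of j] eq
      by (auto dest: inj_onD)
    then show "i = j"
      using side by (auto split: if_splits)
  qed
qed

lemma count_Minus_svec_stable:
  assumes "i \<le> NN m k" "k \<le> l"
  shows "count_list (svec m l i) Minus = count_list (svec m k i) Minus"
  using assms(2)
proof (induction l rule: dec_induct)
  case (step l)
  then show ?case
    using assms(1) NN_mono[of k l m] by auto
qed simp

lemma card_SS_filter:
  assumes "m \<ge> 1"
  shows "card {s \<in> SS m n. P s} = card {i \<in> {1..NN m n}. P (svec m n i)}"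
proof -
  have "{s \<in> SS m n. P s} = svec m n ` {i \<in> {1..NN m n}. P (svec m n i)}"
    by (auto simp: SS_def)
  moreover have "inj_on (svec m n) {i \<in> {1..NN m n}. P (svec m n i)}"
    using svec_inj_on[OF assms] by (rule inj_on_subset) auto
  ultimately show ?thesis
    by (simp add: card_image)
qed

text \<open>
  The stars still owed by the last minus sign, which is followed by \<open>m - 1\<close> stars unless the
  vector ends first: the number of lags \<open>k = n+1-m, \<dots>, n-1\<close> (possibly negative, where
  \<open>N(k) = 1\<close>) with \<open>N(k) < i\<close>.
\<close>

definition pending_stars :: "nat \<Rightarrow> nat \<Rightarrow> nat \<Rightarrow> nat" where
  "pending_stars m n i = card {k \<in> {1 + int n - int m..<int n}. NN m (nat k) < i}"

lemma pending_stars_le: "pending_stars m n i \<le> m - 1"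
proof -
  have "pending_stars m n i \<le> card {1 + int n - int m..<int n}"
    unfolding pending_stars_def by (rule card_mono) auto
  then show ?thesis
    by simp
qed

lemma pending_stars_eq_0:
  assumes "i \<le> NN m (Suc n - m)"
  shows "pending_stars m n i = 0"
proof -
  have "NN m (Suc n - m) \<le> NN m (nat k)" if "1 + int n - int m \<le> k" for k
    using that by (intro NN_mono) linarith
  then have empty: "{k \<in> {1 + int n - int m..<int n}. NN m (nat k) < i} = {}"
    using assms by force
  show ?thesis
    unfolding pending_stars_def empty by simp
qed

lemma star_balance:
  assumes "m \<ge> 1" "1 \<le> i" "i \<le> NN m n"
  shows "int (m - 1) * int (count_list (svec m n i) Minus) - int (count_list (svec m n i) Star)
           = int (pending_stars m n i)"
  using assms(2,3)
proof (induction n arbitrary: i)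
  case 0
  then show ?case
    using NN_pos[of m "Suc 0 - m"] by (simp add: pending_stars_eq_0)
next
  case (Suc n)
  note lag_le = NN_lag_le[OF assms(1), of n]
  consider "NN m n < i" | "i \<le> NN m (Suc n - m)" | "NN m (Suc n - m) < i" "i \<le> NN m n"
    by linarith
  then show ?case
  proof cases
    case 1
    define j where "j = i - NN m n"
    have j: "1 \<le> j" "j \<le> NN m (Suc n - m)"
      using 1 Suc.prems NN_Suc[OF assms(1), of n] by (auto simp: j_def)
    have "NN m (nat k) < i" if "k < int (Suc n)" for k
      using NN_mono[of "nat k" n m] that 1 by (simp add: nat_le_iff)
    then have full: "{k \<in> {1 + int (Suc n) - int m..<int (Suc n)}. NN m (nat k) < i}
        = {1 + int (Suc n) - int m..<int (Suc n)}"
      by auto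
    have "pending_stars m (Suc n) i = m - 1"
      unfolding pending_stars_def full by simp
    then show ?thesis
      using Suc.IH[of j] j lag_le 1 assms(1) pending_stars_eq_0[OF j(2)]
      by (simp add: svec_Suc j_def of_nat_diff algebra_simps del: svec.simps)
  next
    case 2
    have "pending_stars m n i = 0" "pending_stars m (Suc n) i = 0"
      using 2 NN_mono[OF diff_le_mono[of "Suc n" "Suc (Suc n)" m], of m]
      by (auto intro!: pending_stars_eq_0)
    then show ?thesis
      using Suc.IH[of i] Suc.prems 2 lag_le assms(1)
      by (simp add: svec_Suc del: svec.simps)
  next
    case 3
    have "m \<noteq> 1"
      using 3 by auto
    moreover have "nat (1 + int n - int m) = Suc n - m"
      by simp
    moreover have "k < int n" if "k < 1 + int n" "NN m (nat k) < i" for k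
      using that 3 by (cases "k = int n") auto
    ultimately have shift: "{k \<in> {1 + int n - int m..<int n}. NN m (nat k) < i}
        = insert (1 + int n - int m) {k \<in> {1 + int (Suc n) - int m..<int (Suc n)}. NN m (nat k) < i}"
      using 3 assms(1) by (auto simp: antisym_conv1)
    have "pending_stars m n i = Suc (pending_stars m (Suc n) i)"
      unfolding pending_stars_def shift
      by (subst card_insert_disjoint) (auto intro: finite_subset[OF _ finite_atLeastLessThan_int])
    then show ?thesis
      using Suc.IH[of i] Suc.prems 3 assms(1)
      by (simp add: svec_Suc del: svec.simps)
  qed
qed

lemma freq_eq_count_list: "freq s x = count_list s x / length s"
  unfolding freq_def count_list_eq_length_filter by (metis)

lemma count_list_sgn_sum: "count_list s Plus + count_list s Minus + count_list s Star = length s"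
proof (induction s)
  case (Cons y s)
  then show ?case by (cases y) auto
qed simp

lemma freqs_close_of_balanced:
  fixes s :: "sgn list" and \<epsilon> :: real
  defines "M \<equiv> real (count_list s Minus)" and "S \<equiv> real (count_list s Star)"
    and "n \<equiv> real (length s)"
  assumes m: "m \<ge> 1" and n: "0 < n" and \<epsilon>: "0 < \<epsilon>"
    and balanced: "0 \<le> (real m - 1) * M - S" "(real m - 1) * M - S \<le> real m - 1"
    and long: "real m - 1 \<le> \<epsilon> / 2 * n"
    and close: "\<bar>M - pminus m * n\<bar> < \<epsilon> / (2 * real m) * n"
  shows "\<bar>freq s Minus - pminus m\<bar> \<le> \<epsilon> \<and> \<bar>freq s Plus - pplus m\<bar> \<le> \<epsilon> \<and>
    \<bar>freq s Star - pstar m\<bar> \<le> \<epsilon>"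
proof -
  define u where "u = M / n - pminus m"
  define w where "w = ((real m - 1) * M - S) / n"
  have m_pos: "0 < real m"
    using m by simp
  have u: "real m * \<bar>u\<bar> \<le> \<epsilon> / 2"
  proof -
    have "u * n = M - pminus m * n"
      using n by (simp add: u_def field_simps)
    then have "\<bar>u\<bar> * n = \<bar>M - pminus m * n\<bar>"
      using n by (metis abs_mult abs_of_pos)
    then have "\<bar>u\<bar> * n < \<epsilon> / (2 * real m) * n"
      using close by simp
    then show ?thesis
      using n m_pos by (simp add: field_simps)
  qed
  have w: "0 \<le> w" "w \<le> \<epsilon> / 2"
    using balanced long n by (auto simp: w_def divide_le_eq)
  have "real (count_list s Plus) = n - M - S"
    using count_list_sgn_sum[of s] by (simp add: M_def S_def n_def flip: of_nat_add)
  then have freqs: "freq s Minus = M / n" "freq s Star = S / n" "freq s Plus = (n - M - S) / n"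
    by (simp_all add: freq_eq_count_list M_def S_def n_def)
  have "freq s Minus - pminus m = u"
    by (simp add: freqs u_def)
  moreover have "freq s Star - pstar m = (real m - 1) * u - w"
    using n by (simp add: freqs u_def w_def pstar_def field_simps)
  moreover have "freq s Plus - pplus m = w - real m * u"
    using n by (simp add: freqs u_def w_def pplus_def field_simps)
  moreover have "\<bar>u\<bar> \<le> \<epsilon>" "\<bar>(real m - 1) * u - w\<bar> \<le> \<epsilon>" "\<bar>w - real m * u\<bar> \<le> \<epsilon>"
  proof -
    have "\<bar>u\<bar> \<le> real m * \<bar>u\<bar>" "\<bar>(real m - 1) * u\<bar> \<le> real m * \<bar>u\<bar>"
      using m mult_right_mono[of 1 "real m" "\<bar>u\<bar>"] by (simp_all add: abs_mult mult_right_mono)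
    moreover have "\<bar>real m * u\<bar> = real m * \<bar>u\<bar>"
      by (simp add: abs_mult)
    ultimately show "\<bar>u\<bar> \<le> \<epsilon>" "\<bar>(real m - 1) * u - w\<bar> \<le> \<epsilon>" "\<bar>w - real m * u\<bar> \<le> \<epsilon>"
      using u w \<epsilon> by linarith+
  qed
  ultimately show ?thesis
    by simp
qed

lemma eventually_svec_freqs_close:
  fixes \<epsilon> :: real
  assumes m: "m \<ge> 1" and \<epsilon>: "0 < \<epsilon>"
  shows "\<forall>\<^sub>F n in sequentially. \<forall>i \<in> {1..NN m n}.
    \<bar>real (count_list (svec m n i) Minus) - pminus m * n\<bar> < \<epsilon> / (2 * real m) * n \<longrightarrow>
    \<bar>freq (svec m n i) Minus - pminus m\<bar> \<le> \<epsilon> \<and> \<bar>freq (svec m n i) Plus - pplus m\<bar> \<le> \<epsilon> \<and>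
    \<bar>freq (svec m n i) Star - pstar m\<bar> \<le> \<epsilon>"
proof -
  obtain N :: nat where N: "(real m - 1) / (\<epsilon> / 2) < N"
    using reals_Archimedean2 by blast
  show ?thesis
    using eventually_ge_at_top[of "Suc N"]
  proof eventually_elim
    case (elim n)
    then have "(real m - 1) / (\<epsilon> / 2) \<le> n"
      using N by linarith
    then have long: "real m - 1 \<le> \<epsilon> / 2 * n"
      using \<epsilon> by (simp add: pos_divide_le_eq mult.commute)
    show ?case
    proof (intro ballI impI)
      fix i assume i: "i \<in> {1..NN m n}"
        and close: "\<bar>real (count_list (svec m n i) Minus) - pminus m * n\<bar> < \<epsilon> / (2 * real m) * n"
      have "real (m - 1) * real (count_list (svec m n i) Minus) - real (count_list (svec m n i) Star)
          = real (pending_stars m n i)"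
        using arg_cong[OF star_balance[OF m, of i n], of real_of_int] i by simp
      then have "0 \<le> (real m - 1) * real (count_list (svec m n i) Minus) - real (count_list (svec m n i) Star)"
        "(real m - 1) * real (count_list (svec m n i) Minus) - real (count_list (svec m n i) Star)
          \<le> real m - 1"
        using pending_stars_le[of m n i] m by (simp_all add: of_nat_diff)
      then show "\<bar>freq (svec m n i) Minus - pminus m\<bar> \<le> \<epsilon> \<and> \<bar>freq (svec m n i) Plus - pplus m\<bar> \<le> \<epsilon> \<and>
          \<bar>freq (svec m n i) Star - pstar m\<bar> \<le> \<epsilon>"
        using elim long close by (intro freqs_close_of_balanced[OF m _ \<epsilon>]) auto
    qed
  qed
qed

section \<open>The growth rate and exponential tilting\<close>

lemma phi_root:
  assumes m: "m \<ge> 1"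
  shows "1 < phi m" "phi m ^ (m - 1) * (phi m - 1) = 1"
proof -
  define f where "f r = r ^ (m - 1) * (r - 1)" for r :: real
  have f_eq: "f r = r ^ m - r ^ (m - 1)" for r
    using power_minus_mult[of m r] m by (simp add: f_def algebra_simps)
  have f_strict_mono: "f u < f v" if "1 < u" "u < v" for u v
  proof -
    have "u ^ (m - 1) \<le> v ^ (m - 1)"
      using that by (intro power_mono) auto
    then show ?thesis
      using that unfolding f_def by (intro mult_le_less_imp_less) auto
  qed
  have "\<forall>r. 1 \<le> r \<and> r \<le> 2 \<longrightarrow> isCont f r"
    unfolding f_def by (auto intro!: continuous_intros)
  moreover have "f 1 \<le> 1" "1 \<le> f 2"
    by (simp_all add: f_def)
  ultimately obtain r where r: "1 \<le> r" "r \<le> 2" "f r = 1"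
    using IVT[of f 1 1 2] by auto
  have r1: "r \<noteq> 1"
    using r by (auto simp: f_def)
  have "phi m = r"
    unfolding phi_def
  proof (rule the_equality)
    show "1 < r \<and> r \<le> 2 \<and> r ^ m - r ^ (m - 1) - 1 = 0"
      using r r1 f_eq[of r] by auto
    show "s = r" if "1 < s \<and> s \<le> 2 \<and> s ^ m - s ^ (m - 1) - 1 = 0" for s
      using that f_eq[of s] r r1 f_strict_mono[of s r] f_strict_mono[of r s]
      by (cases s r rule: linorder_cases) auto
  qed
  then show "1 < phi m" "phi m ^ (m - 1) * (phi m - 1) = 1"
    using r r1 by (auto simp: f_def)
qed

lemma NN_lower_bound:
  assumes m: "m \<ge> 1"
  shows "phi m ^ n \<le> real (NN m n) * phi m ^ m"
proof (rule lagged_recurrence_lower[where t = 1 and m = m])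
  show "real (NN m (Suc n)) = real (NN m n) + 1 * real (NN m (Suc n - m))" for n
    using NN_Suc[OF m] by simp
  show "phi m ^ m \<le> phi m ^ (m - 1) + 1"
    using phi_root[OF m] power_minus_mult[of m "phi m"] m by (simp add: algebra_simps)
qed (use phi_root[OF m] m in auto)

lemma pminus_denominator_pos: "m \<ge> 1 \<Longrightarrow> 0 < 1 + real m * (phi m - 1)"
  using phi_root(1)[of m] by (intro add_pos_nonneg) auto

lemma pminus_mult: "m \<ge> 1 \<Longrightarrow> pminus m * (1 + real m * (phi m - 1)) = phi m - 1"
  using pminus_denominator_pos[of m] unfolding pminus_def by simp

lemma tilt_deriv:
  assumes m: "m \<ge> 1"
  shows "((\<lambda>t. (phi m * t powr a) ^ (m - 1) * (phi m * t powr a - 1) - t) has_real_derivative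
           phi m ^ (m - 1) * (1 + real m * (phi m - 1)) * (a - pminus m)) (at 1)"
proof -
  define \<phi> where "\<phi> = phi m"
  have D: "((\<lambda>t. (\<phi> * t powr a) ^ (m - 1) * (\<phi> * t powr a - 1) - t) has_real_derivative
     (real (m - 1) * (\<phi> * 1 powr a) ^ (m - 1 - 1) * (\<phi> * (a * 1 powr (a - 1))) * (\<phi> * 1 powr a - 1)
       + (\<phi> * 1 powr a) ^ (m - 1) * (\<phi> * (a * 1 powr (a - 1))) - 1)) (at 1)"
    by (auto intro!: derivative_eq_intros)
  have lower_power: "real (m - 1) * \<phi> ^ (m - 1 - 1) * \<phi> = real (m - 1) * \<phi> ^ (m - 1)"
    using power_minus_mult[of "m - 1" \<phi>] by (cases "m \<ge> 2") auto
  have "real (m - 1) * (\<phi> * 1 powr a) ^ (m - 1 - 1) * (\<phi> * (a * 1 powr (a - 1))) * (\<phi> * 1 powr a - 1)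
       + (\<phi> * 1 powr a) ^ (m - 1) * (\<phi> * (a * 1 powr (a - 1))) - 1
     = (real (m - 1) * \<phi> ^ (m - 1 - 1) * \<phi>) * a * (\<phi> - 1) + \<phi> ^ (m - 1) * \<phi> * a - 1"
    by (simp add: algebra_simps)
  also have "\<dots> = \<phi> ^ (m - 1) * a * (1 + real m * (\<phi> - 1)) - 1"
    unfolding lower_power using m by (simp add: algebra_simps of_nat_diff)
  also have "\<dots> = \<phi> ^ (m - 1) * (1 + real m * (\<phi> - 1)) * (a - pminus m)"
  proof -
    have one: "\<phi> ^ (m - 1) * (1 + real m * (\<phi> - 1)) * pminus m = 1"
      using pminus_mult[OF m] phi_root(2)[OF m] unfolding \<phi>_def by (metis mult.assoc mult.commute)
    show ?thesis
      using one by (simp add: algebra_simps)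
  qed
  finally show ?thesis
    using D by (simp add: \<phi>_def)
qed

lemma exists_tilt:
  assumes m: "m \<ge> 1" and a: "a \<noteq> pminus m"
  obtains t where "0 < t" "0 < (t - 1) * (a - pminus m)"
    "(phi m * t powr a) ^ (m - 1) + t \<le> (phi m * t powr a) ^ m"
proof -
  define g where "g t = (phi m * t powr a) ^ (m - 1) * (phi m * t powr a - 1) - t" for t
  define c where "c = phi m ^ (m - 1) * (1 + real m * (phi m - 1))"
  have c: "0 < c"
    using phi_root(1)[OF m] pminus_denominator_pos[OF m] by (simp add: c_def)
  have deriv: "(g has_real_derivative c * (a - pminus m)) (at 1)"
    unfolding g_def c_def by (rule tilt_deriv[OF m])
  have g1: "g 1 = 0"
    using phi_root(2)[OF m] by (simp add: g_def)
  have char: "(phi m * t powr a) ^ (m - 1) + t \<le> (phi m * t powr a) ^ m" if "0 < g t" for t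
    using that power_minus_mult[of m "phi m * t powr a"] m by (simp add: g_def algebra_simps)
  consider "pminus m < a" | "a < pminus m"
    using a by linarith
  then show ?thesis
  proof cases
    case 1
    then obtain d where d: "0 < d" "\<And>h. 0 < h \<Longrightarrow> h < d \<Longrightarrow> g 1 < g (1 + h)"
      using DERIV_pos_inc_right[OF deriv] c by auto
    show ?thesis
      using d(2)[of "d / 2"] d(1) 1 g1 by (intro that[of "1 + d / 2"] char) auto
  next
    case 2
    then obtain d where d: "0 < d" "\<And>h. 0 < h \<Longrightarrow> h < d \<Longrightarrow> g 1 < g (1 - h)"
      using DERIV_neg_dec_left[OF deriv] c by (auto simp: mult_pos_neg)
    define h where "h = min (d / 2) (1 / 2)"
    have h: "0 < h" "h < d" "h < 1"
      using d(1) by (auto simp: h_def)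
    show ?thesis
      using d(2)[OF h(1,2)] h 2 g1 by (intro that[of "1 - h"] char) (auto simp: mult_pos_neg)
  qed
qed

section \<open>Concentration of the number of minus signs\<close>

definition minus_weight :: "nat \<Rightarrow> real \<Rightarrow> nat \<Rightarrow> real" where
  "minus_weight m t n = (\<Sum>i = 1..NN m n. t ^ count_list (svec m n i) Minus)"

lemma minus_weight_Suc:
  assumes m: "m \<ge> 1"
  shows "minus_weight m t (Suc n) = minus_weight m t n + t * minus_weight m t (Suc n - m)"
proof -
  let ?f = "\<lambda>i. t ^ count_list (svec m (Suc n) i) Minus"
  let ?N = "NN m n" and ?L = "NN m (Suc n - m)"
  have "minus_weight m t (Suc n) = sum ?f {1..?N} + sum ?f {?N + 1..?N + ?L}"
    unfolding minus_weight_def NN_Suc[OF m] by (rule sum.ub_add_nat) simp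
  also have "sum ?f {1..?N} = minus_weight m t n"
    unfolding minus_weight_def by (rule sum.cong) (auto simp: svec_Suc[OF m] del: svec.simps)
  also have "sum ?f {?N + 1..?N + ?L} = (\<Sum>j = 1..?L. t * t ^ count_list (svec m n j) Minus)"
    using sum.shift_bounds_cl_nat_ivl[of ?f 1 ?N ?L] NN_pos[of m n]
    by (simp add: add.commute svec_Suc[OF m] del: svec.simps)
  also have "\<dots> = t * minus_weight m t (Suc n - m)"
    unfolding minus_weight_def sum_distrib_left
    using count_Minus_svec_stable[of _ m "Suc n - m" n] m by (intro sum.cong) auto
  finally show ?thesis .
qed

lemma minus_weight_0 [simp]: "minus_weight m t 0 = 1"
  by (simp add: minus_weight_def)

lemma minus_count_tail_le:
  fixes a b t :: real
  assumes m: "m \<ge> 1" and t: "0 < t" and sign: "0 < (t - 1) * (a - pminus m)"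
    and char: "(phi m * t powr b) ^ (m - 1) + t \<le> (phi m * t powr b) ^ m"
  shows "card {i \<in> {1..NN m n}.
            0 \<le> (real (count_list (svec m n i) Minus) - a * n) * (a - pminus m)} / real (NN m n)
         \<le> max 1 (t / (phi m * t powr b - 1)) * phi m ^ m * (t powr (b - a)) ^ n"
    (is "card ?A / _ \<le> ?C * _ * ?r ^ n")
proof -
  let ?cnt = "\<lambda>i. real (count_list (svec m n i) Minus)"
  let ?c = "t powr (a * n)"
  have "?A \<subseteq> {i \<in> {1..NN m n}. ?c \<le> t ^ count_list (svec m n i) Minus}"
  proof safe
    fix i assume "0 \<le> (?cnt i - a * n) * (a - pminus m)"
    then have "0 \<le> (t - 1) * (?cnt i - a * n)"
      using sign by (auto simp: zero_less_mult_iff zero_le_mult_iff)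
    then have "?c \<le> t powr ?cnt i"
      by (rule powr_le_powr_of_sign[OF t])
    then show "?c \<le> t ^ count_list (svec m n i) Minus"
      using t by (simp add: powr_realpow)
  qed
  then have "card ?A \<le> card {i \<in> {1..NN m n}. ?c \<le> t ^ count_list (svec m n i) Minus}"
    by (rule card_mono[rotated]) simp
  then have "?c * card ?A \<le> ?c * card {i \<in> {1..NN m n}. ?c \<le> t ^ count_list (svec m n i) Minus}"
    by (intro mult_left_mono) auto
  also have "\<dots> \<le> minus_weight m t n"
    unfolding minus_weight_def using t by (intro card_mult_le_sum) auto
  also have "\<dots> \<le> ?C * (phi m * t powr b) ^ n"
    using minus_weight_Suc[OF m] m t char phi_root(1)[OF m]
    by (intro lagged_recurrence_upper[where m = m]) auto
  also have "\<dots> = ?C * phi m ^ n * (?c * ?r ^ n)"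
    using t by (simp add: power_mult_distrib powr_power powr_add[symmetric] algebra_simps)
  also have "\<dots> \<le> ?C * (real (NN m n) * phi m ^ m) * (?c * ?r ^ n)"
    using NN_lower_bound[OF m, of n] t by (intro mult_right_mono mult_left_mono) auto
  finally have "?c * card ?A \<le> ?c * (?C * phi m ^ m * ?r ^ n * real (NN m n))"
    by (simp add: algebra_simps)
  then show ?thesis
    using t NN_pos[of m n] by (simp add: divide_le_eq)
qed

lemma minus_count_tail_vanishes:
  fixes a :: real
  assumes m: "m \<ge> 1" and a: "a \<noteq> pminus m"
  shows "(\<lambda>n. card {i \<in> {1..NN m n}.
            0 \<le> (real (count_list (svec m n i) Minus) - a * n) * (a - pminus m)} / real (NN m n))
         \<longlonglongrightarrow> 0"
proof -
  define b where "b = (a + pminus m) / 2"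
  have "b \<noteq> pminus m"
    using a by (simp add: b_def)
  then obtain t where t: "0 < t" "0 < (t - 1) * (b - pminus m)"
    and char: "(phi m * t powr b) ^ (m - 1) + t \<le> (phi m * t powr b) ^ m"
    using exists_tilt[OF m] by blast
  have sign: "0 < (t - 1) * (a - pminus m)"
    using t(2) by (simp add: b_def zero_less_mult_iff)
  have "t powr (b - a) < 1"
    using t by (auto simp: b_def mult_less_0_iff zero_less_mult_iff intro!: powr_less_one_of_sign)
  then have "(\<lambda>n. max 1 (t / (phi m * t powr b - 1)) * phi m ^ m * (t powr (b - a)) ^ n)
      \<longlonglongrightarrow> max 1 (t / (phi m * t powr b - 1)) * phi m ^ m * 0"
    by (intro tendsto_mult tendsto_const LIMSEQ_power_zero) auto
  then have geometric: "(\<lambda>n. max 1 (t / (phi m * t powr b - 1)) * phi m ^ m * (t powr (b - a)) ^ n)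
      \<longlonglongrightarrow> 0"
    by simp
  show ?thesis
    by (rule tendsto_sandwich[OF _ _ tendsto_const geometric])
      (simp, intro always_eventually allI minus_count_tail_le[OF m t(1) sign char])
qed

lemma minus_freq_concentrates:
  fixes \<delta> :: real
  assumes m: "m \<ge> 1" and \<delta>: "0 < \<delta>"
  shows "(\<lambda>n. card {i \<in> {1..NN m n}.
           \<delta> * n \<le> \<bar>real (count_list (svec m n i) Minus) - pminus m * n\<bar>} / real (NN m n))
         \<longlonglongrightarrow> 0"
proof -
  let ?cnt = "\<lambda>n i. real (count_list (svec m n i) Minus)"
  let ?tail = "\<lambda>a n. {i \<in> {1..NN m n}. 0 \<le> (?cnt n i - a * n) * (a - pminus m)}"
  let ?far = "\<lambda>n. {i \<in> {1..NN m n}. \<delta> * n \<le> \<bar>?cnt n i - pminus m * n\<bar>}"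
  have "(\<lambda>n. card (?tail (pminus m + \<delta>) n) / real (NN m n)
      + card (?tail (pminus m - \<delta>) n) / real (NN m n)) \<longlonglongrightarrow> 0 + 0"
    using \<delta> by (intro tendsto_add minus_count_tail_vanishes[OF m]) auto
  then have tails: "(\<lambda>n. card (?tail (pminus m + \<delta>) n) / real (NN m n)
      + card (?tail (pminus m - \<delta>) n) / real (NN m n)) \<longlonglongrightarrow> 0"
    by simp
  have bound: "card (?far n) / real (NN m n)
      \<le> card (?tail (pminus m + \<delta>) n) / real (NN m n) + card (?tail (pminus m - \<delta>) n) / real (NN m n)"
    for n
  proof -
    have "?far n \<subseteq> ?tail (pminus m + \<delta>) n \<union> ?tail (pminus m - \<delta>) n"
    proof (intro subsetI, elim CollectE conjE)
      fix i assume i: "i \<in> {1..NN m n}" and far: "\<delta> * n \<le> \<bar>?cnt n i - pminus m * n\<bar>"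
      have "\<delta> * n \<le> ?cnt n i - pminus m * n \<or> \<delta> * n \<le> pminus m * n - ?cnt n i"
        using far by linarith
      then show "i \<in> ?tail (pminus m + \<delta>) n \<union> ?tail (pminus m - \<delta>) n"
      proof
        assume "\<delta> * n \<le> ?cnt n i - pminus m * n"
        then have "0 \<le> (?cnt n i - (pminus m + \<delta>) * n) * (pminus m + \<delta> - pminus m)"
          using \<delta> by (intro mult_nonneg_nonneg) (auto simp: algebra_simps)
        then show ?thesis
          using i by blast
      next
        assume "\<delta> * n \<le> pminus m * n - ?cnt n i"
        then have "0 \<le> (?cnt n i - (pminus m - \<delta>) * n) * (pminus m - \<delta> - pminus m)"
          using \<delta> by (intro mult_nonpos_nonpos) (auto simp: algebra_simps)
        then show ?thesis
          using i by blast
      qed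
    qed
    then have "card (?far n) \<le> card (?tail (pminus m + \<delta>) n \<union> ?tail (pminus m - \<delta>) n)"
      by (rule card_mono[rotated]) simp
    also have "\<dots> \<le> card (?tail (pminus m + \<delta>) n) + card (?tail (pminus m - \<delta>) n)"
      by (rule card_Un_le)
    finally show ?thesis
      using NN_pos[of m n] by (simp add: divide_right_mono flip: add_divide_distrib)
  qed
  show ?thesis
    by (rule tendsto_sandwich[OF _ _ tendsto_const tails]) (simp, intro always_eventually allI bound)
qed

theorem theorem2:
  fixes m :: nat and \<epsilon> :: real
  assumes "m \<ge> 1" and "0 < \<epsilon>" and "\<epsilon> < 1"
  shows "(\<lambda>n. real (card {s \<in> SS m n.
              \<bar>freq s Minus - pminus m\<bar> \<le> \<epsilon> \<and>
              \<bar>freq s Plus - pplus m\<bar> \<le> \<epsilon> \<and>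
              \<bar>freq s Star - pstar m\<bar> \<le> \<epsilon>}) / real (NN m n))
         \<longlonglongrightarrow> 1"
proof -
  define good where "good s \<longleftrightarrow> \<bar>freq s Minus - pminus m\<bar> \<le> \<epsilon> \<and>
    \<bar>freq s Plus - pplus m\<bar> \<le> \<epsilon> \<and> \<bar>freq s Star - pstar m\<bar> \<le> \<epsilon>" for s
  let ?far = "\<lambda>n. {i \<in> {1..NN m n}.
    \<epsilon> / (2 * real m) * n \<le> \<bar>real (count_list (svec m n i) Minus) - pminus m * n\<bar>}"
  have "\<forall>\<^sub>F n in sequentially. {i \<in> {1..NN m n}. \<not> good (svec m n i)} \<subseteq> ?far n"
    using eventually_svec_freqs_close[OF assms(1,2)]
    by eventually_elim (fastforce simp: good_def)
  moreover have "(\<lambda>n. card (?far n) / real (NN m n)) \<longlonglongrightarrow> 0"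
    using assms by (intro minus_freq_concentrates) auto
  ultimately have "(\<lambda>n. card {i \<in> {1..NN m n}. good (svec m n i)} / card {1..NN m n}) \<longlonglongrightarrow> 1"
    using NN_pos[of m] by (intro filter_card_ratio_tendsto_1[where E = ?far]) (auto simp: Suc_le_eq)
  then show ?thesis
    unfolding card_SS_filter[OF assms(1)] good_def by simp
qed

end
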